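(* Let $L\subseteq Q$ be a dense extension of Lie algebras. Then $[L,L]\subseteq [Q,Q]$ is also a dense extension.
   Context: Lie algebras over a commutative unital ring $\Phi$; $[L,L]$ is the span of brackets of elements of $L$. For a Lie algebra $Q$, $M(Q)$ is the subalgebra of $\mathrm{End}_\Phi(Q)$ generated by the identity and all $\mathrm{ad}_x$, $x\in Q$, where $\mathrm{ad}_x(y)=[x,y]$. An extension $L\subseteq Q$ (i.e. $L$ a subalgebra of $Q$) is dense if the only $\mu\in M(Q)$ with $\mu(L)=0$ is $\mu=0$. *)

theory Defs
  imports Complex_Main
begin

text \<open>A Lie algebra over the commutative unital ring 'a is represented by a carrier set Q
inside an ambient 'a-module 'b (scalar multiplication sc), with a bracket br that
is bilinear, alternating and satisfies the Jacobi identity on Q.\<close>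

definition lie_algebra ::
  "('a::comm_ring_1 \<Rightarrow> 'b::ab_group_add \<Rightarrow> 'b) \<Rightarrow> ('b \<Rightarrow> 'b \<Rightarrow> 'b) \<Rightarrow> 'b set \<Rightarrow> bool" where
  "lie_algebra sc br Q \<longleftrightarrow>
     module sc \<and> module.subspace sc Q \<and>
     (\<forall>x\<in>Q. \<forall>y\<in>Q. br x y \<in> Q) \<and>
     (\<forall>x\<in>Q. \<forall>y\<in>Q. \<forall>z\<in>Q. br (x + y) z = br x z + br y z) \<and>
     (\<forall>x\<in>Q. \<forall>y\<in>Q. \<forall>z\<in>Q. br x (y + z) = br x y + br x z) \<and>
     (\<forall>c. \<forall>x\<in>Q. \<forall>y\<in>Q. br (sc c x) y = sc c (br x y)) \<and>
     (\<forall>c. \<forall>x\<in>Q. \<forall>y\<in>Q. br x (sc c y) = sc c (br x y)) \<and>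
     (\<forall>x\<in>Q. br x x = 0) \<and>
     (\<forall>x\<in>Q. \<forall>y\<in>Q. \<forall>z\<in>Q. br x (br y z) + br y (br z x) + br z (br x y) = 0)"

definition lie_subalgebra ::
  "('a::comm_ring_1 \<Rightarrow> 'b::ab_group_add \<Rightarrow> 'b) \<Rightarrow> ('b \<Rightarrow> 'b \<Rightarrow> 'b) \<Rightarrow> 'b set \<Rightarrow> 'b set \<Rightarrow> bool" where
  "lie_subalgebra sc br L Q \<longleftrightarrow>
     L \<subseteq> Q \<and> module.subspace sc L \<and> (\<forall>x\<in>L. \<forall>y\<in>L. br x y \<in> L)"

definition derived ::
  "('a::comm_ring_1 \<Rightarrow> 'b::ab_group_add \<Rightarrow> 'b) \<Rightarrow> ('b \<Rightarrow> 'b \<Rightarrow> 'b) \<Rightarrow> 'b set \<Rightarrow> 'b set" where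
  "derived sc br L = module.span sc {br x y | x y. x \<in> L \<and> y \<in> L}"

text \<open>M(Q): the subalgebra of End(Q) generated by the identity and all ad_x, x in Q.
Elements are represented by functions 'b => 'b; only their restriction to Q matters.\<close>
inductive_set mult_alg ::
  "('a::comm_ring_1 \<Rightarrow> 'b::ab_group_add \<Rightarrow> 'b) \<Rightarrow> ('b \<Rightarrow> 'b \<Rightarrow> 'b) \<Rightarrow> 'b set \<Rightarrow> ('b \<Rightarrow> 'b) set"
  for sc br Q where
  ma_id: "id \<in> mult_alg sc br Q"
| ma_ad: "x \<in> Q \<Longrightarrow> (\<lambda>y. br x y) \<in> mult_alg sc br Q"
| ma_zero: "(\<lambda>y. 0) \<in> mult_alg sc br Q"
| ma_add: "f \<in> mult_alg sc br Q \<Longrightarrow> g \<in> mult_alg sc br Q \<Longrightarrow> (\<lambda>y. f y + g y) \<in> mult_alg sc br Q"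
| ma_scale: "f \<in> mult_alg sc br Q \<Longrightarrow> (\<lambda>y. sc c (f y)) \<in> mult_alg sc br Q"
| ma_comp: "f \<in> mult_alg sc br Q \<Longrightarrow> g \<in> mult_alg sc br Q \<Longrightarrow> f \<circ> g \<in> mult_alg sc br Q"

definition dense_ext ::
  "('a::comm_ring_1 \<Rightarrow> 'b::ab_group_add \<Rightarrow> 'b) \<Rightarrow> ('b \<Rightarrow> 'b \<Rightarrow> 'b) \<Rightarrow> 'b set \<Rightarrow> 'b set \<Rightarrow> bool" where
  "dense_ext sc br L Q \<longleftrightarrow> lie_subalgebra sc br L Q \<and>
     (\<forall>\<mu>\<in>mult_alg sc br Q. (\<forall>l\<in>L. \<mu> l = 0) \<longrightarrow> (\<forall>q\<in>Q. \<mu> q = 0))"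

end

theory Submission
  imports Defs
begin

text \<open>Let \<mu> \<in> M([Q,Q]) vanish on [L,L]; then \<mu> \<in> M(Q). For l \<in> L the operator
\<mu> \<circ> ad l vanishes on L, so by density on Q: \<mu>([L,Q]) = 0. By anticommutativity
\<mu> \<circ> ad q then vanishes on L for every q \<in> Q, so again by density \<mu>([Q,Q]) = 0.\<close>

lemma mult_alg_mono:
  assumes "f \<in> mult_alg sc br Q'" and "Q' \<subseteq> Q"
  shows "f \<in> mult_alg sc br Q"
  using assms by induction (auto intro: mult_alg.intros)

lemma derived_subset:
  assumes "module sc" and "module.subspace sc S" and "\<forall>x\<in>S. \<forall>y\<in>S. br x y \<in> S"
  shows "derived sc br S \<subseteq> S"
proof -
  interpret module sc by fact
  show ?thesis
    unfolding derived_def by (rule span_minimal) (use assms in auto)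
qed

lemma derived_mono:
  assumes "module sc" and "L \<subseteq> Q"
  shows "derived sc br L \<subseteq> derived sc br Q"
proof -
  interpret module sc by fact
  show ?thesis
    unfolding derived_def by (rule span_mono) (use assms in blast)
qed

lemma bracket_in_derived:
  assumes "module sc" and "x \<in> L" and "y \<in> L"
  shows "br x y \<in> derived sc br L"
proof -
  interpret module sc by fact
  show ?thesis
    unfolding derived_def using assms by (intro span_base) blast
qed

context
  fixes sc :: "'a::comm_ring_1 \<Rightarrow> 'b::ab_group_add \<Rightarrow> 'b"
    and br :: "'b \<Rightarrow> 'b \<Rightarrow> 'b"
    and Q :: "'b set"
  assumes lie: "lie_algebra sc br Q"
begin

interpretation module sc
  using lie by (simp add: lie_algebra_def)

lemma lie_algebra_module: "module sc"
  by (rule module_axioms)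

lemma lie_algebra_subspace: "subspace Q"
  using lie by (simp add: lie_algebra_def)

lemma lie_algebra_bracket_closed: "x \<in> Q \<Longrightarrow> y \<in> Q \<Longrightarrow> br x y \<in> Q"
  using lie by (simp add: lie_algebra_def)

lemma lie_algebra_derived_subset: "derived sc br Q \<subseteq> Q"
  using derived_subset[OF module_axioms lie_algebra_subspace] lie_algebra_bracket_closed
  by blast

lemma lie_algebra_bracket_anticomm:
  assumes x: "x \<in> Q" and y: "y \<in> Q"
  shows "br y x = - br x y"
proof -
  have xy: "x + y \<in> Q"
    using x y lie_algebra_subspace subspace_add by blast
  have alt: "\<And>z. z \<in> Q \<Longrightarrow> br z z = 0"
    and add_left: "\<And>u v w. u \<in> Q \<Longrightarrow> v \<in> Q \<Longrightarrow> w \<in> Q \<Longrightarrow> br (u + v) w = br u w + br v w"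
    and add_right: "\<And>u v w. u \<in> Q \<Longrightarrow> v \<in> Q \<Longrightarrow> w \<in> Q \<Longrightarrow> br u (v + w) = br u v + br u w"
    using lie by (simp_all add: lie_algebra_def)
  have "0 = br (x + y) (x + y)"
    using alt xy by simp
  also have "\<dots> = br x x + br x y + (br y x + br y y)"
    using add_left add_right x y xy by simp
  also have "\<dots> = br x y + br y x"
    using alt x y by simp
  finally show ?thesis
    by (simp add: eq_neg_iff_add_eq_0 add.commute)
qed

lemma derived_lie_subalgebra:
  assumes "lie_subalgebra sc br L Q"
  shows "lie_subalgebra sc br (derived sc br L) (derived sc br Q)"
proof -
  have L: "L \<subseteq> Q" "subspace L" "\<forall>x\<in>L. \<forall>y\<in>L. br x y \<in> L"
    using assms by (auto simp: lie_subalgebra_def)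
  have "derived sc br L \<subseteq> L"
    using derived_subset[OF module_axioms L(2,3)] .
  then have "\<forall>x\<in>derived sc br L. \<forall>y\<in>derived sc br L. br x y \<in> derived sc br L"
    using bracket_in_derived[OF module_axioms] by blast
  moreover have "subspace (derived sc br L)"
    by (simp add: derived_def)
  ultimately show ?thesis
    unfolding lie_subalgebra_def using derived_mono[OF module_axioms L(1)] by blast
qed

lemma mult_alg_linear_on:
  assumes "f \<in> mult_alg sc br Q"
  shows "(\<forall>y\<in>Q. f y \<in> Q) \<and> (\<forall>a\<in>Q. \<forall>b\<in>Q. f (a + b) = f a + f b)
     \<and> (\<forall>c. \<forall>a\<in>Q. f (sc c a) = sc c (f a))"
  using assms
proof induction
  case (ma_ad x)
  then show ?case
    using lie by (simp add: lie_algebra_def)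
next
  case ma_zero
  then show ?case
    using lie_algebra_subspace by (simp add: subspace_0)
next
  case (ma_add f g)
  then show ?case
    using lie_algebra_subspace by (simp add: subspace_add algebra_simps)
next
  case (ma_scale f c)
  then show ?case
    using lie_algebra_subspace
    by (auto simp: subspace_scale local.scale_right_distrib mult.commute)
qed auto

lemma mult_alg_kernel_subspace:
  assumes "f \<in> mult_alg sc br Q"
  shows "subspace {x \<in> Q. f x = 0}"
proof -
  note f = mult_alg_linear_on[OF assms]
  have "f (0 + 0) = f 0 + f 0"
    using f lie_algebra_subspace subspace_0 by blast
  then have "f 0 = 0"
    by simp
  then show ?thesis
    unfolding subspace_def using f lie_algebra_subspace
    by (auto simp: subspace_0 subspace_add subspace_scale)
qed

lemma mult_alg_neg:
  assumes "f \<in> mult_alg sc br Q" and "x \<in> Q"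
  shows "f (- x) = - f x"
proof -
  note f = mult_alg_linear_on[OF assms(1)]
  have "- x \<in> Q"
    using assms(2) lie_algebra_subspace subspace_neg by blast
  then have "f (x + - x) = f x + f (- x)"
    using f assms(2) by blast
  moreover have "f (x + - x) = 0"
    using mult_alg_kernel_subspace[OF assms(1)] subspace_0 by fastforce
  ultimately show ?thesis
    by (simp add: eq_neg_iff_add_eq_0 add.commute)
qed

lemma mult_alg_vanishes_on_derived:
  assumes "f \<in> mult_alg sc br Q" and "\<And>x y. x \<in> Q \<Longrightarrow> y \<in> Q \<Longrightarrow> f (br x y) = 0"
  shows "\<forall>x\<in>derived sc br Q. f x = 0"
proof -
  have "derived sc br Q \<subseteq> {x \<in> Q. f x = 0}"
    unfolding derived_def
    using mult_alg_kernel_subspace[OF assms(1)] assms(2) lie_algebra_bracket_closed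
    by (intro span_minimal) auto
  then show ?thesis
    by blast
qed

lemma dense_ext_vanishes_on_derived:
  assumes dense: "dense_ext sc br L Q"
    and f: "f \<in> mult_alg sc br Q"
    and f_LL: "\<And>x y. x \<in> L \<Longrightarrow> y \<in> L \<Longrightarrow> f (br x y) = 0"
  shows "\<forall>x\<in>derived sc br Q. f x = 0"
proof -
  have LQ: "L \<subseteq> Q"
    using dense by (simp add: dense_ext_def lie_subalgebra_def)
  have density: "\<forall>q\<in>Q. g q = 0" if "g \<in> mult_alg sc br Q" "\<forall>l\<in>L. g l = 0" for g
    using dense that by (simp add: dense_ext_def)
  have f_LQ: "f (br l q) = 0" if l: "l \<in> L" and q: "q \<in> Q" for l q
  proof -
    have "f \<circ> br l \<in> mult_alg sc br Q"
      using f l LQ by (auto intro: mult_alg.intros)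
    moreover have "\<forall>l'\<in>L. (f \<circ> br l) l' = 0"
      using f_LL l by simp
    ultimately have "\<forall>q\<in>Q. (f \<circ> br l) q = 0"
      by (rule density)
    then show ?thesis
      using q by simp
  qed
  have f_QQ: "f (br q q') = 0" if q: "q \<in> Q" and q': "q' \<in> Q" for q q'
  proof -
    have "f \<circ> br q \<in> mult_alg sc br Q"
      using f q by (auto intro: mult_alg.intros)
    moreover have "\<forall>l\<in>L. (f \<circ> br q) l = 0"
    proof
      fix l assume l: "l \<in> L"
      have lQ: "l \<in> Q"
        using l LQ by blast
      have "f (br q l) = f (- br l q)"
        using lie_algebra_bracket_anticomm[OF lQ q] by simp
      also have "\<dots> = - f (br l q)"
        using mult_alg_neg[OF f lie_algebra_bracket_closed[OF lQ q]] .
      also have "\<dots> = 0"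
        using f_LQ[OF l q] by simp
      finally show "(f \<circ> br q) l = 0"
        by simp
    qed
    ultimately have "\<forall>q'\<in>Q. (f \<circ> br q) q' = 0"
      by (rule density)
    then show ?thesis
      using q' by simp
  qed
  show ?thesis
    using mult_alg_vanishes_on_derived[OF f f_QQ] .
qed

end

theorem mainTheorem12:
  fixes sc :: "'a::comm_ring_1 \<Rightarrow> 'b::ab_group_add \<Rightarrow> 'b"
    and br :: "'b \<Rightarrow> 'b \<Rightarrow> 'b"
    and L Q :: "'b set"
  assumes "lie_algebra sc br Q"
    and "dense_ext sc br L Q"
  shows "dense_ext sc br (derived sc br L) (derived sc br Q)"
proof -
  have "\<forall>x\<in>derived sc br Q. f x = 0"
    if "f \<in> mult_alg sc br (derived sc br Q)" and "\<forall>l\<in>derived sc br L. f l = 0" for f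
  proof -
    have "f \<in> mult_alg sc br Q"
      using mult_alg_mono[OF that(1) lie_algebra_derived_subset[OF assms(1)]] .
    moreover have "f (br x y) = 0" if "x \<in> L" "y \<in> L" for x y
      using that \<open>\<forall>l\<in>derived sc br L. f l = 0\<close>
        bracket_in_derived[OF lie_algebra_module[OF assms(1)]] by blast
    ultimately show ?thesis
      by (rule dense_ext_vanishes_on_derived[OF assms])
  qed
  moreover have "lie_subalgebra sc br (derived sc br L) (derived sc br Q)"
    using derived_lie_subalgebra[OF assms(1)] assms(2) by (simp add: dense_ext_def)
  ultimately show ?thesis
    by (simp add: dense_ext_def)
qed

end
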